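(* For $t>0$ and $c>0$ let $f(t)=2\,\mathrm{arsh}\bigl(c\,\mathrm{sh}(t/2)\bigr)$ and $g(t)=ct$. If $c\in(0,1)$, then $f(t)/g(t)$ is an increasing function from $(0,\infty)$ to $(1,1/c)$; if $c>1$, then $f(t)/g(t)$ is a decreasing function from $(0,\infty)$ to $(1/c,1)$. In particular, for $c\in(0,1)$ and $t\ge0$, \[ ct\le 2\,\mathrm{arsh}\bigl(c\,\mathrm{sh}(t/2)\bigr)\le t, \] and for $c>1$ and $t\ge0$, \[ t\le 2\,\mathrm{arsh}\bigl(c\,\mathrm{sh}(t/2)\bigr)\le ct. \]
   Context: $\mathrm{sh}$ is the hyperbolic sine and $\mathrm{arsh}$ its inverse. *)

theory Defs
  imports Complex_Main
begin

definition f35 :: "real \<Rightarrow> real \<Rightarrow> real" where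
  "f35 c t = 2 * arsinh (c * sinh (t / 2))"

definition g35 :: "real \<Rightarrow> real \<Rightarrow> real" where
  "g35 c t = c * t"

end

theory Submission
  imports Defs "HOL-Real_Asymp.Real_Asymp"
begin

(* Write f = f35 c. Then f 0 = 0 and f' t = c / sqrt (c^2 + (1 - c^2) / cosh (t/2)^2), which is
   strictly increasing on [0, infinity) if c < 1 and strictly decreasing if c > 1. By the mean value
   theorem f t = t * f' z for some 0 < z < t, so t * f' t - f t has the sign of 1 - c and the
   slope f t / t inherits the monotonicity of f'. The ratio f t / (c t) is continuous with limit
   1 at 0 (as f' 0 = c) and 1/c at infinity (as f t ~ t), so by the intermediate value theorem its
   range is the open interval between these limits; multiplying by c t gives the inequalities. *)

lemma strict_mono_on_slope_from_origin:
  fixes f f' :: "real \<Rightarrow> real"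
  assumes f0: "f 0 = 0"
    and deriv: "\<And>t. t \<ge> 0 \<Longrightarrow> (f has_real_derivative f' t) (at t)"
    and mono: "strict_mono_on {0..} f'"
  shows "strict_mono_on {0<..} (\<lambda>t. f t / t)"
proof (rule strict_mono_onI)
  fix r s :: real
  assume "r \<in> {0<..}" "s \<in> {0<..}" "r < s"
  show "f r / r < f s / s"
  proof (rule DERIV_pos_imp_increasing[OF \<open>r < s\<close>])
    fix x assume "r \<le> x" "x \<le> s"
    with \<open>r \<in> {0<..}\<close> have "x > 0" by simp
    obtain z where "0 < z" "z < x" and mvt: "f x - f 0 = (x - 0) * f' z"
      using MVT2[OF \<open>x > 0\<close>, of f f'] deriv by force
    have "f' z < f' x"
      using \<open>0 < z\<close> \<open>z < x\<close> by (intro strict_mono_onD[OF mono]) auto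
    with mvt f0 \<open>x > 0\<close> have "f x < x * f' x" by simp
    with \<open>x > 0\<close> have "(f' x * x - f x * 1) / (x * x) > 0"
      by (simp add: algebra_simps)
    moreover have "((\<lambda>t. f t / t) has_real_derivative (f' x * x - f x * 1) / (x * x)) (at x)"
      using \<open>x > 0\<close> by (intro DERIV_divide deriv DERIV_ident) auto
    ultimately show "\<exists>y. ((\<lambda>t. f t / t) has_real_derivative y) (at x) \<and> 0 < y"
      by blast
  qed
qed

lemma strict_antimono_on_slope_from_origin:
  fixes f f' :: "real \<Rightarrow> real"
  assumes "f 0 = 0"
    and "\<And>t. t \<ge> 0 \<Longrightarrow> (f has_real_derivative f' t) (at t)"
    and "strict_antimono_on {0..} f'"
  shows "strict_antimono_on {0<..} (\<lambda>t. f t / t)"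
proof -
  have "strict_mono_on {0<..} (\<lambda>t. - f t / t)"
    using assms by (intro strict_mono_on_slope_from_origin[where f' = "\<lambda>t. - f' t"])
      (auto intro: DERIV_minus simp: monotone_on_def)
  then show ?thesis by (auto simp: monotone_on_def)
qed

lemma strict_mono_on_image_greaterThan:
  fixes R :: "real \<Rightarrow> real"
  assumes mono: "strict_mono_on {0<..} R"
    and cont: "\<And>t. 0 < t \<Longrightarrow> isCont R t"
    and lim0: "(R \<longlongrightarrow> L0) (at_right 0)"
    and lim_top: "(R \<longlongrightarrow> L1) at_top"
  shows "R ` {0<..} = {L0<..<L1}"
proof (intro equalityI subsetI)
  fix y assume "y \<in> R ` {0<..}"
  then obtain t where "0 < t" "y = R t" by auto
  have "L0 \<le> R (t / 2)"
  proof (rule tendsto_upperbound[OF lim0])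
    show "\<forall>\<^sub>F x in at_right 0. R x \<le> R (t / 2)"
      unfolding eventually_at_right_field using \<open>0 < t\<close>
      by (intro exI[of _ "t / 2"]) (auto intro: strict_mono_on_leD[OF mono])
  qed simp
  moreover have "R (t + 1) \<le> L1"
  proof (rule tendsto_lowerbound[OF lim_top])
    show "\<forall>\<^sub>F x in at_top. R (t + 1) \<le> R x"
      unfolding eventually_at_top_linorder using \<open>0 < t\<close>
      by (intro exI[of _ "t + 1"]) (auto intro: strict_mono_on_leD[OF mono])
  qed simp
  moreover have "R (t / 2) < R t" "R t < R (t + 1)"
    using \<open>0 < t\<close> by (auto intro: strict_mono_onD[OF mono])
  ultimately show "y \<in> {L0<..<L1}"
    using \<open>y = R t\<close> by simp
next
  fix y assume "y \<in> {L0<..<L1}"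
  then have "\<forall>\<^sub>F x in at_right 0. R x < y" "\<forall>\<^sub>F x in at_top. y < R x"
    using lim0 lim_top by (auto intro: order_tendstoD)
  then obtain e N where "0 < e" "\<And>x. 0 < x \<Longrightarrow> x < e \<Longrightarrow> R x < y"
      and "\<And>x. N \<le> x \<Longrightarrow> y < R x"
    unfolding eventually_at_right_field eventually_at_top_linorder by blast
  then have "0 < e / 2" "R (e / 2) < y" "e / 2 \<le> max N (e / 2)" "y < R (max N (e / 2))"
    by auto
  then obtain x where "e / 2 \<le> x" "R x = y"
    using IVT[of R "e / 2" y "max N (e / 2)"] cont by force
  with \<open>0 < e / 2\<close> show "y \<in> R ` {0<..}" by force
qed

lemma strict_antimono_on_image_greaterThan:
  fixes R :: "real \<Rightarrow> real"
  assumes "strict_antimono_on {0<..} R"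
    and "\<And>t. 0 < t \<Longrightarrow> isCont R t"
    and "(R \<longlongrightarrow> L0) (at_right 0)"
    and "(R \<longlongrightarrow> L1) at_top"
  shows "R ` {0<..} = {L1<..<L0}"
proof -
  have "(\<lambda>t. - R t) ` {0<..} = {-L0<..<-L1}"
    using assms by (intro strict_mono_on_image_greaterThan)
      (auto intro: isCont_minus tendsto_minus simp: monotone_on_def)
  then have "uminus ` (\<lambda>t. - R t) ` {0<..} = uminus ` {-L0<..<-L1}"
    by simp
  then show ?thesis
    by (simp add: image_image)
qed

lemma cosh_half_square_strict_mono:
  fixes a b :: real
  assumes "0 \<le> a" "a < b"
  shows "(cosh (a / 2))\<^sup>2 < (cosh (b / 2))\<^sup>2"
  using assms cosh_real_strict_mono[of "a / 2" "b / 2"] cosh_real_ge_1[of "a / 2"]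
  by (intro power_strict_mono) auto

(* The chain-rule derivative c cosh (t/2) / sqrt ((c sinh (t/2))^2 + 1), divided through by
   cosh (t/2) so that t enters only via cosh (t/2)^2. *)
definition f35' :: "real \<Rightarrow> real \<Rightarrow> real" where
  "f35' c t = c / sqrt (c\<^sup>2 + (1 - c\<^sup>2) / (cosh (t / 2))\<^sup>2)"

lemma f35_has_real_derivative: "(f35 c has_real_derivative f35' c t) (at t)"
proof -
  have "((\<lambda>t. c * sinh (t / 2)) has_real_derivative c * (cosh (t / 2) * (1 / 2))) (at t)"
    by (rule derivative_eq_intros refl | simp)+
  from DERIV_cmult[OF DERIV_chain2[OF arsinh_real_has_field_derivative this], of 2]
  have "(f35 c has_real_derivative
          2 * (1 / sqrt ((c * sinh (t / 2))\<^sup>2 + 1) * (c * (cosh (t / 2) * (1 / 2))))) (at t)"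
    unfolding f35_def [abs_def] .
  also have "(c * sinh (t / 2))\<^sup>2 + 1 =
      (cosh (t / 2))\<^sup>2 * (c\<^sup>2 + (1 - c\<^sup>2) / (cosh (t / 2))\<^sup>2)"
    by (simp add: sinh_square_eq field_simps)
  finally show ?thesis
    by (simp add: f35'_def real_sqrt_mult)
qed

lemma f35'_radicand_pos: "0 < c\<^sup>2 + (1 - c\<^sup>2) / (cosh (x::real))\<^sup>2"
proof -
  have "c\<^sup>2 + (1 - c\<^sup>2) / (cosh x)\<^sup>2 = ((c * sinh x)\<^sup>2 + 1) / (cosh x)\<^sup>2"
    by (simp add: sinh_square_eq field_simps)
  then show ?thesis by (simp add: add_nonneg_pos)
qed

lemma f35'_strict_mono_on:
  assumes "0 < c" "c < 1"
  shows "strict_mono_on {0..} (f35' c)"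
proof (rule strict_mono_onI)
  fix a b :: real
  assume "a \<in> {0..}" "b \<in> {0..}" "a < b"
  then have "(cosh (a / 2))\<^sup>2 < (cosh (b / 2))\<^sup>2"
    by (intro cosh_half_square_strict_mono) auto
  moreover have "0 < 1 - c\<^sup>2"
    using assms by (simp add: power_less_one_iff)
  ultimately have "(1 - c\<^sup>2) / (cosh (b / 2))\<^sup>2 < (1 - c\<^sup>2) / (cosh (a / 2))\<^sup>2"
    by (intro divide_strict_left_mono) auto
  then show "f35' c a < f35' c b"
    unfolding f35'_def using \<open>0 < c\<close> f35'_radicand_pos
    by (intro divide_strict_left_mono) (auto intro: mult_pos_pos)
qed

lemma f35'_strict_antimono_on:
  assumes "1 < c"
  shows "strict_antimono_on {0..} (f35' c)"
proof (rule monotone_onI)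
  fix a b :: real
  assume "a \<in> {0..}" "b \<in> {0..}" "a < b"
  then have "(cosh (a / 2))\<^sup>2 < (cosh (b / 2))\<^sup>2"
    by (intro cosh_half_square_strict_mono) auto
  moreover have "1 - c\<^sup>2 < 0"
    using assms by simp
  ultimately have "(1 - c\<^sup>2) / (cosh (a / 2))\<^sup>2 < (1 - c\<^sup>2) / (cosh (b / 2))\<^sup>2"
    by (intro divide_strict_left_mono_neg) auto
  then show "f35' c b < f35' c a"
    unfolding f35'_def using \<open>1 < c\<close> f35'_radicand_pos
    by (intro divide_strict_left_mono) (auto intro: mult_pos_pos)
qed

lemma f35_div_g35_strict_mono_on:
  assumes "0 < c" "c < 1"
  shows "strict_mono_on {0<..} (\<lambda>t. f35 c t / g35 c t)"
proof -
  have "strict_mono_on {0<..} (\<lambda>t. f35 c t / t)"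
    using f35_has_real_derivative f35'_strict_mono_on[OF assms]
    by (rule strict_mono_on_slope_from_origin[rotated]) (simp add: f35_def)
  with \<open>0 < c\<close> show ?thesis
    by (auto simp: monotone_on_def g35_def mult.commute[of c] divide_strict_right_mono
        simp flip: divide_divide_eq_left)
qed

lemma f35_div_g35_strict_antimono_on:
  assumes "1 < c"
  shows "strict_antimono_on {0<..} (\<lambda>t. f35 c t / g35 c t)"
proof -
  have "strict_antimono_on {0<..} (\<lambda>t. f35 c t / t)"
    using f35_has_real_derivative f35'_strict_antimono_on[OF assms]
    by (rule strict_antimono_on_slope_from_origin[rotated]) (simp add: f35_def)
  with \<open>1 < c\<close> show ?thesis
    by (auto simp: monotone_on_def g35_def mult.commute[of c] divide_strict_right_mono
        simp flip: divide_divide_eq_left)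
qed

lemma isCont_f35_div_g35:
  "c \<noteq> 0 \<Longrightarrow> t \<noteq> 0 \<Longrightarrow> isCont (\<lambda>t. f35 c t / g35 c t) t"
  unfolding f35_def [abs_def] g35_def [abs_def] by (intro continuous_intros) auto

lemma f35_div_g35_tendsto_at_right_0:
  "0 < c \<Longrightarrow> ((\<lambda>t. f35 c t / g35 c t) \<longlongrightarrow> 1) (at_right 0)"
  unfolding f35_def [abs_def] g35_def [abs_def] by real_asymp

lemma f35_div_g35_tendsto_at_top:
  "0 < c \<Longrightarrow> ((\<lambda>t. f35 c t / g35 c t) \<longlongrightarrow> 1 / c) at_top"
  unfolding f35_def [abs_def] g35_def [abs_def] by real_asymp (simp add: inverse_eq_divide)

lemma f35_between_if_ratio_image:
  assumes "0 < c" "0 \<le> t" and image: "(\<lambda>t. f35 c t / g35 c t) ` {0<..} = {a<..<b}"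
  shows "c * t * a \<le> f35 c t \<and> f35 c t \<le> c * t * b"
proof (cases "t = 0")
  case False
  with assms have "0 < c * t" "f35 c t / (c * t) \<in> {a<..<b}"
    by (auto simp: g35_def)
  then show ?thesis
    by (simp add: field_simps)
qed (simp add: f35_def)

theorem proposition3p5:
  fixes c :: real
  assumes "c > 0"
  shows "(c < 1 \<longrightarrow>
            strict_mono_on {0<..} (\<lambda>t. f35 c t / g35 c t) \<and>
            (\<lambda>t. f35 c t / g35 c t) ` {0<..} = {1<..<1/c} \<and>
            (\<forall>t::real. t \<ge> 0 \<longrightarrow> c * t \<le> 2 * arsinh (c * sinh (t / 2)) \<and>
                                     2 * arsinh (c * sinh (t / 2)) \<le> t))
       \<and> (c > 1 \<longrightarrow>
            strict_antimono_on {0<..} (\<lambda>t. f35 c t / g35 c t) \<and>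
            (\<lambda>t. f35 c t / g35 c t) ` {0<..} = {1/c<..<1} \<and>
            (\<forall>t::real. t \<ge> 0 \<longrightarrow> t \<le> 2 * arsinh (c * sinh (t / 2)) \<and>
                                     2 * arsinh (c * sinh (t / 2)) \<le> c * t))"
proof (intro conjI impI)
  assume "c < 1"
  with assms show mono: "strict_mono_on {0<..} (\<lambda>t. f35 c t / g35 c t)"
    by (rule f35_div_g35_strict_mono_on)
  show image: "(\<lambda>t. f35 c t / g35 c t) ` {0<..} = {1<..<1/c}"
    using mono isCont_f35_div_g35 f35_div_g35_tendsto_at_right_0[OF assms]
      f35_div_g35_tendsto_at_top[OF assms] assms
    by (intro strict_mono_on_image_greaterThan) auto
  show "\<forall>t::real. t \<ge> 0 \<longrightarrow> c * t \<le> 2 * arsinh (c * sinh (t / 2)) \<and>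
                                     2 * arsinh (c * sinh (t / 2)) \<le> t"
    using f35_between_if_ratio_image[OF assms _ image] assms by (simp add: f35_def)
next
  assume "c > 1"
  then show mono: "strict_antimono_on {0<..} (\<lambda>t. f35 c t / g35 c t)"
    by (rule f35_div_g35_strict_antimono_on)
  show image: "(\<lambda>t. f35 c t / g35 c t) ` {0<..} = {1/c<..<1}"
    using mono isCont_f35_div_g35 f35_div_g35_tendsto_at_right_0[OF assms]
      f35_div_g35_tendsto_at_top[OF assms] assms
    by (intro strict_antimono_on_image_greaterThan) auto
  show "\<forall>t::real. t \<ge> 0 \<longrightarrow> t \<le> 2 * arsinh (c * sinh (t / 2)) \<and>
                                     2 * arsinh (c * sinh (t / 2)) \<le> c * t"
    using f35_between_if_ratio_image[OF assms _ image] assms by (simp add: f35_def)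
qed

end
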